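(* Let $G=*_C G_i$ be an amalgamated free product, $n\ge1$, and $t_1,\dots,t_n,g_1,\dots,g_n\in G$. If the tuple $((t_1,g_1),\dots,(t_n,g_n))$ is tamed, then $$l(t_1^{g_1}t_2^{g_2}\cdots t_n^{g_n})\ge l(g_1)+n+l(g_n).$$
   Context: Notation $x^y=y^{-1}xy$. Every $g\in G=*_C G_i$ can be written $g=cx_1\cdots x_n$ with $c\in C$, $x_j\in G_{i_j}\setminus C$ and $i_j\neq i_{j+1}$; $n$ is determined by $g$ and called the length $l(g)$ (so $l(g)=0$ iff $g\in C$). A product $h_1\cdots h_k$ (i.e. the tuple $(h_1,\dots,h_k)$) is reduced if $l(h_1\cdots h_k)=l(h_1)+\cdots+l(h_k)$. If $h=h'h''$ with the product $h'h''$ reduced, $h'$ is a left factor and $h''$ a right factor of $h$. Set $g_0=g_{n+1}=t_0=t_{n+1}=1$. For $1\le i\le n$, $t_i$ is cancellable if at least one of: (1) $R g_i^{-1}t_i\in C$ for some right factor $R$ of $g_{i-1}$; (2) $t_ig_iL\in C$ for some left factor $L$ of $g_{i+1}^{-1}$; (3) $R\,g_i^{-1}t_ig_i\,L\in C$ for some right factor $R$ of $g_{i-1}$ and some left factor $L$ of $g_{i+1}^{-1}$. The tuple $((t_1,g_1),\dots,(t_n,g_n))$ is tamed if: (a) for each $i$, $l(t_i)=1$ and the product $g_i^{-1}t_ig_i$ (tuple $(g_i^{-1},t_i,g_i)$) is reduced; (b) for $1\le i\le n-1$, if $l(g_ig_{i+1}^{-1})=0$ then $l(t_it_{i+1})=2$;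 (c) no $t_i$ is cancellable. *)

theory Defs
  imports "HOL-Algebra.Algebra"
begin

text \<open>Amalgamated free products, presented internally: a group G with a family of
subgroups H i (i in I), all containing a common subgroup C, pairwise meeting in C,
generating G, and satisfying the normal form theorem (no nonempty alternating
product of elements of H i - C lies in C).\<close>

definition alt_word :: "('a,'b) monoid_scheme \<Rightarrow> 'i set \<Rightarrow> ('i \<Rightarrow> 'a set) \<Rightarrow> 'a set
    \<Rightarrow> ('i \<times> 'a) list \<Rightarrow> bool" where
  "alt_word G I H C ws \<longleftrightarrow>
     (\<forall>p\<in>set ws. fst p \<in> I \<and> snd p \<in> H (fst p) - C) \<and>
     (\<forall>k. Suc k < length ws \<longrightarrow> fst (ws ! k) \<noteq> fst (ws ! Suc k))"

definition word_prod :: "('a,'b) monoid_scheme \<Rightarrow> ('i \<times> 'a) list \<Rightarrow> 'a" where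
  "word_prod G ws = foldr (\<lambda>p acc. snd p \<otimes>\<^bsub>G\<^esub> acc) ws \<one>\<^bsub>G\<^esub>"

definition amalg_free_product :: "('a,'b) monoid_scheme \<Rightarrow> 'i set \<Rightarrow> ('i \<Rightarrow> 'a set) \<Rightarrow> 'a set \<Rightarrow> bool" where
  "amalg_free_product G I H C \<longleftrightarrow>
     group G \<and> subgroup C G \<and>
     (\<forall>i\<in>I. subgroup (H i) G \<and> C \<subseteq> H i) \<and>
     (\<forall>i\<in>I. \<forall>j\<in>I. i \<noteq> j \<longrightarrow> H i \<inter> H j = C) \<and>
     generate G (\<Union>i\<in>I. H i) = carrier G \<and>
     (\<forall>ws. ws \<noteq> [] \<and> alt_word G I H C ws \<longrightarrow> word_prod G ws \<notin> C)"

text \<open>Length l(g): the n in a normal form g = c x_1 ... x_n (determined by g).\<close>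
definition amalg_len :: "('a,'b) monoid_scheme \<Rightarrow> 'i set \<Rightarrow> ('i \<Rightarrow> 'a set) \<Rightarrow> 'a set \<Rightarrow> 'a \<Rightarrow> nat" where
  "amalg_len G I H C g = (LEAST n. \<exists>c\<in>C. \<exists>ws. alt_word G I H C ws \<and> length ws = n \<and>
       g = c \<otimes>\<^bsub>G\<^esub> word_prod G ws)"

definition left_factor :: "('a,'b) monoid_scheme \<Rightarrow> 'i set \<Rightarrow> ('i \<Rightarrow> 'a set) \<Rightarrow> 'a set \<Rightarrow> 'a \<Rightarrow> 'a \<Rightarrow> bool" where
  "left_factor G I H C h' h \<longleftrightarrow> h' \<in> carrier G \<and> (\<exists>h''\<in>carrier G. h = h' \<otimes>\<^bsub>G\<^esub> h'' \<and>
     amalg_len G I H C h = amalg_len G I H C h' + amalg_len G I H C h'')"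

definition right_factor :: "('a,'b) monoid_scheme \<Rightarrow> 'i set \<Rightarrow> ('i \<Rightarrow> 'a set) \<Rightarrow> 'a set \<Rightarrow> 'a \<Rightarrow> 'a \<Rightarrow> bool" where
  "right_factor G I H C h'' h \<longleftrightarrow> h'' \<in> carrier G \<and> (\<exists>h'\<in>carrier G. h = h' \<otimes>\<^bsub>G\<^esub> h'' \<and>
     amalg_len G I H C h = amalg_len G I H C h' + amalg_len G I H C h'')"

definition ext_seq :: "('a,'b) monoid_scheme \<Rightarrow> nat \<Rightarrow> (nat \<Rightarrow> 'a) \<Rightarrow> nat \<Rightarrow> 'a" where
  "ext_seq G n g k = (if 1 \<le> k \<and> k \<le> n then g k else \<one>\<^bsub>G\<^esub>)"

definition cancellable :: "('a,'b) monoid_scheme \<Rightarrow> 'i set \<Rightarrow> ('i \<Rightarrow> 'a set) \<Rightarrow> 'a set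
    \<Rightarrow> nat \<Rightarrow> (nat \<Rightarrow> 'a) \<Rightarrow> (nat \<Rightarrow> 'a) \<Rightarrow> nat \<Rightarrow> bool" where
  "cancellable G I H C n t g i \<longleftrightarrow>
    (let gi = ext_seq G n g i; ti = ext_seq G n t i;
         gp = ext_seq G n g (i - 1); gs = ext_seq G n g (i + 1) in
     (\<exists>R. right_factor G I H C R gp \<and> R \<otimes>\<^bsub>G\<^esub> inv\<^bsub>G\<^esub> gi \<otimes>\<^bsub>G\<^esub> ti \<in> C) \<or>
     (\<exists>L. left_factor G I H C L (inv\<^bsub>G\<^esub> gs) \<and> ti \<otimes>\<^bsub>G\<^esub> gi \<otimes>\<^bsub>G\<^esub> L \<in> C) \<or>
     (\<exists>R L. right_factor G I H C R gp \<and> left_factor G I H C L (inv\<^bsub>G\<^esub> gs) \<and>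
        R \<otimes>\<^bsub>G\<^esub> inv\<^bsub>G\<^esub> gi \<otimes>\<^bsub>G\<^esub> ti \<otimes>\<^bsub>G\<^esub> gi \<otimes>\<^bsub>G\<^esub> L \<in> C))"

definition tamed :: "('a,'b) monoid_scheme \<Rightarrow> 'i set \<Rightarrow> ('i \<Rightarrow> 'a set) \<Rightarrow> 'a set
    \<Rightarrow> nat \<Rightarrow> (nat \<Rightarrow> 'a) \<Rightarrow> (nat \<Rightarrow> 'a) \<Rightarrow> bool" where
  "tamed G I H C n t g \<longleftrightarrow>
    (\<forall>i\<in>{1..n}. amalg_len G I H C (t i) = 1 \<and>
        amalg_len G I H C (inv\<^bsub>G\<^esub> g i \<otimes>\<^bsub>G\<^esub> t i \<otimes>\<^bsub>G\<^esub> g i) =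
        amalg_len G I H C (inv\<^bsub>G\<^esub> g i) + amalg_len G I H C (t i) + amalg_len G I H C (g i)) \<and>
    (\<forall>i\<in>{1..<n}. amalg_len G I H C (g i \<otimes>\<^bsub>G\<^esub> inv\<^bsub>G\<^esub> g (i + 1)) = 0 \<longrightarrow>
        amalg_len G I H C (t i \<otimes>\<^bsub>G\<^esub> t (i + 1)) = 2) \<and>
    (\<forall>i\<in>{1..n}. \<not> cancellable G I H C n t g i)"

text \<open>The product t_1^{g_1} ... t_n^{g_n}, where x^y = y^{-1} x y.\<close>
definition conj_prod :: "('a,'b) monoid_scheme \<Rightarrow> nat \<Rightarrow> (nat \<Rightarrow> 'a) \<Rightarrow> (nat \<Rightarrow> 'a) \<Rightarrow> 'a" where
  "conj_prod G n t g = foldr (\<lambda>i acc. (inv\<^bsub>G\<^esub> g i \<otimes>\<^bsub>G\<^esub> t i \<otimes>\<^bsub>G\<^esub> g i) \<otimes>\<^bsub>G\<^esub> acc) [1..<n+1] \<one>\<^bsub>G\<^esub>"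

end

theory Submission
  imports Defs
begin

text \<open>Every element is \<open>c x\<^sub>1 \<cdots> x\<^sub>m\<close> with \<open>x\<^sub>i\<close> alternating between factors; all facts
  about the length \<open>l\<close> (existence of normal forms, uniqueness of their length,
  subadditivity) follow from one reduction: in \<open>w e v\<^sup>-\<^sup>1\<close> cancel the longest suffixes of
  \<open>w\<close> and \<open>v\<close> that cancel modulo \<open>C\<close>, then absorb or merge a single letter at the junction.

  The normal form of
  \<open>t\<^sub>1\<^bsup>g\<^sub>1\<^esup> \<cdots> t\<^sub>k\<^bsup>g\<^sub>k\<^esup>\<close> is a word of length at least \<open>l(g\<^sub>1) + k - 1\<close>, then one letter containing
  \<open>t\<^sub>k\<close>, then \<open>g\<^sub>k\<close>.  Passing to \<open>k + 1\<close> inserts the reduced form of \<open>g\<^sub>k g\<^sub>k\<^sub>+\<^sub>1\<^sup>-\<^sup>1\<close> between the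
  letters of \<open>t\<^sub>k\<close> and \<open>t\<^sub>k\<^sub>+\<^sub>1\<close>.  The letter of \<open>t\<^sub>k\<close> may swallow one letter of it, and the
  letter of \<open>t\<^sub>k\<^sub>+\<^sub>1\<close> another one; tamedness says exactly that neither collapses into \<open>C\<close>
  and that the two do not meet when everything else cancels.  So the length grows by at
  least one, and at the end \<open>g\<^sub>n\<close> contributes its \<open>l(g\<^sub>n)\<close> letters.\<close>

lemma (in group) foldr_mult_init:
  assumes "\<forall>i\<in>set xs. s i \<in> carrier G" and "a \<in> carrier G"
  shows "foldr (\<lambda>i acc. s i \<otimes> acc) xs a = foldr (\<lambda>i acc. s i \<otimes> acc) xs \<one> \<otimes> a"
proof -
  have "foldr (\<lambda>i acc. s i \<otimes> acc) xs a = foldr (\<lambda>i acc. s i \<otimes> acc) xs \<one> \<otimes> a \<and>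
      foldr (\<lambda>i acc. s i \<otimes> acc) xs \<one> \<in> carrier G"
    using assms by (induction xs) (simp_all add: m_assoc)
  then show ?thesis ..
qed

lemma (in group) conj_prod_Suc:
  assumes "\<forall>i\<in>{1..Suc k}. t i \<in> carrier G \<and> g i \<in> carrier G"
  shows "conj_prod G (Suc k) t g = conj_prod G k t g \<otimes> (inv g (Suc k) \<otimes> t (Suc k) \<otimes> g (Suc k))"
proof -
  let ?s = "\<lambda>i. inv g i \<otimes> t i \<otimes> g i"
  have s: "\<forall>i\<in>set [1..<Suc k]. ?s i \<in> carrier G" "?s (Suc k) \<in> carrier G"
    using assms by auto
  have "[1..<Suc k + 1] = [1..<Suc k] @ [Suc k]"
    by simp
  then have "conj_prod G (Suc k) t g = foldr (\<lambda>i acc. ?s i \<otimes> acc) [1..<Suc k] (?s (Suc k))"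
    using s(2) unfolding conj_prod_def by (simp only: foldr_append) simp
  also have "\<dots> = conj_prod G k t g \<otimes> ?s (Suc k)"
    unfolding foldr_mult_init[OF s] by (simp add: conj_prod_def)
  finally show ?thesis .
qed

locale amalgam =
  fixes G :: "('a, 'b) monoid_scheme" (structure) and I :: "'i set"
    and H :: "'i \<Rightarrow> 'a set" and C :: "'a set"
  assumes amalg_free_product: "amalg_free_product G I H C"
begin

sublocale group G
  using amalg_free_product by (simp add: amalg_free_product_def)

sublocale C: subgroup C G
  using amalg_free_product by (simp add: amalg_free_product_def)

lemma H_subgroup: "i \<in> I \<Longrightarrow> subgroup (H i) G"
  and C_subset_H: "i \<in> I \<Longrightarrow> C \<subseteq> H i"
  and generate_factors: "generate G (\<Union>i\<in>I. H i) = carrier G"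
  and alt_word_prod_notin_C: "ws \<noteq> [] \<Longrightarrow> alt_word G I H C ws \<Longrightarrow> word_prod G ws \<notin> C"
  using amalg_free_product unfolding amalg_free_product_def by blast+

abbreviation alternating :: "('i \<times> 'a) list \<Rightarrow> bool" where
  "alternating \<equiv> alt_word G I H C"

abbreviation wprod :: "('i \<times> 'a) list \<Rightarrow> 'a" where
  "wprod \<equiv> word_prod G"

abbreviation len :: "'a \<Rightarrow> nat" where
  "len \<equiv> amalg_len G I H C"

lemma C_carrier [intro]: "c \<in> C \<Longrightarrow> c \<in> carrier G"
  using C.subset by blast

lemma H_carrier [intro]: "i \<in> I \<Longrightarrow> x \<in> H i \<Longrightarrow> x \<in> carrier G"
  using subgroup.subset[OF H_subgroup] by blast

lemma H_mult_closed [intro]: "i \<in> I \<Longrightarrow> x \<in> H i \<Longrightarrow> y \<in> H i \<Longrightarrow> x \<otimes> y \<in> H i"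
  by (rule subgroup.m_closed[OF H_subgroup])

lemma H_inv_closed [intro]: "i \<in> I \<Longrightarrow> x \<in> H i \<Longrightarrow> inv x \<in> H i"
  by (rule subgroup.m_inv_closed[OF H_subgroup])

lemma C_in_H [intro]: "i \<in> I \<Longrightarrow> c \<in> C \<Longrightarrow> c \<in> H i"
  using C_subset_H by blast

lemma C_mult_left_iff [simp]: "c \<in> C \<Longrightarrow> x \<in> carrier G \<Longrightarrow> c \<otimes> x \<in> C \<longleftrightarrow> x \<in> C"
  by (metis C.m_closed C.m_inv_closed C_carrier inv_solve_left')

lemma C_mult_right_iff [simp]: "c \<in> C \<Longrightarrow> x \<in> carrier G \<Longrightarrow> x \<otimes> c \<in> C \<longleftrightarrow> x \<in> C"
  by (metis C.m_closed C.m_inv_closed C_carrier inv_solve_right')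

lemma C_inv_iff [simp]: "x \<in> carrier G \<Longrightarrow> inv x \<in> C \<longleftrightarrow> x \<in> C"
  by (metis C.m_inv_closed inv_inv)

lemma alternating_Cons:
  "alternating (p # ws) \<longleftrightarrow> fst p \<in> I \<and> snd p \<in> H (fst p) - C \<and> alternating ws \<and>
     (ws \<noteq> [] \<longrightarrow> fst p \<noteq> fst (hd ws))"
  unfolding alt_word_def by (cases ws) (auto simp: nth_Cons split: nat.splits)

lemma alternating_Nil [simp]: "alternating []"
  by (simp add: alt_word_def)

lemma alternating_append:
  "alternating (xs @ ys) \<longleftrightarrow> alternating xs \<and> alternating ys \<and>
     (xs \<noteq> [] \<longrightarrow> ys \<noteq> [] \<longrightarrow> fst (last xs) \<noteq> fst (hd ys))"
  by (induction xs) (auto simp: alternating_Cons)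

lemma wprod_Nil [simp]: "wprod [] = \<one>"
  and wprod_Cons [simp]: "wprod (p # ws) = snd p \<otimes> wprod ws"
  by (simp_all add: word_prod_def)

lemma letter_carrier: "alternating ws \<Longrightarrow> p \<in> set ws \<Longrightarrow> snd p \<in> carrier G"
  unfolding alt_word_def by blast

lemma wprod_closed [simp, intro]: "alternating ws \<Longrightarrow> wprod ws \<in> carrier G"
  by (induction ws) (auto simp: alternating_Cons)

lemma wprod_append:
  assumes "alternating xs" and "alternating ys"
  shows "wprod (xs @ ys) = wprod xs \<otimes> wprod ys"
  using assms(1)
proof (induction xs)
  case (Cons p xs)
  then show ?case
    using assms(2) letter_carrier[OF Cons.prems list.set_intros(1)] by (auto simp: alternating_Cons m_assoc)
qed (use assms(2) in auto)

definition word_inv :: "('i \<times> 'a) list \<Rightarrow> ('i \<times> 'a) list" where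
  "word_inv ws = rev (map (\<lambda>(i, x). (i, inv x)) ws)"

lemma word_inv_simps [simp]:
  "word_inv [] = []"
  "word_inv (p # ws) = word_inv ws @ [(fst p, inv snd p)]"
  "word_inv (xs @ ys) = word_inv ys @ word_inv xs"
  "length (word_inv ws) = length ws"
  "word_inv ws = [] \<longleftrightarrow> ws = []"
  by (auto simp: word_inv_def case_prod_beta)

lemma fst_last_word_inv: "ws \<noteq> [] \<Longrightarrow> fst (last (word_inv ws)) = fst (hd ws)"
  by (cases ws) auto

lemma alternating_word_inv: "alternating ws \<Longrightarrow> alternating (word_inv ws)"
proof (induction ws)
  case (Cons p ws)
  then show ?case
    using letter_carrier[OF Cons.prems list.set_intros(1)]
    by (auto simp: alternating_Cons alternating_append fst_last_word_inv)
qed simp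

lemma wprod_word_inv: "alternating ws \<Longrightarrow> wprod (word_inv ws) = inv (wprod ws)"
proof (induction ws)
  case (Cons p ws)
  have p: "fst p \<in> I" "snd p \<in> H (fst p) - C" "alternating ws"
    using Cons.prems by (auto simp: alternating_Cons)
  then have x: "snd p \<in> carrier G"
    by blast
  with p have "alternating [(fst p, inv snd p)]"
    by (auto simp: alternating_Cons)
  with p x Cons.IH show ?case
    by (simp add: wprod_append alternating_word_inv inv_mult_group)
qed simp

lemma wprod_snoc: "alternating (xs @ [p]) \<Longrightarrow> wprod (xs @ [p]) = wprod xs \<otimes> snd p"
  using letter_carrier[of "xs @ [p]" p] by (simp add: wprod_append alternating_append)

lemma alternating_absorb_right:
  assumes "alternating \<alpha>" and "\<alpha> \<noteq> []" and "c \<in> C"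
  obtains \<alpha>' i x where "\<alpha> = \<alpha>' @ [(i, x)]" "alternating (\<alpha>' @ [(i, x \<otimes> c)])"
    "wprod (\<alpha>' @ [(i, x \<otimes> c)]) = wprod \<alpha> \<otimes> c" "fst (hd (\<alpha>' @ [(i, x \<otimes> c)])) = fst (hd \<alpha>)"
proof -
  obtain \<alpha>' i x where \<alpha>': "\<alpha> = \<alpha>' @ [(i, x)]"
    using assms(2) by (cases \<alpha> rule: rev_cases) auto
  have u: "alternating \<alpha>'" "i \<in> I" "x \<in> H i - C" "\<alpha>' \<noteq> [] \<longrightarrow> fst (last \<alpha>') \<noteq> i"
    using assms(1) \<alpha>' by (auto simp: alternating_append alternating_Cons)
  then have "x \<in> carrier G"
    by blast
  with u assms(3) have alt: "alternating (\<alpha>' @ [(i, x \<otimes> c)])"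
    by (auto simp: alternating_append alternating_Cons)
  show ?thesis
  proof (rule that[OF \<alpha>' alt])
    show "wprod (\<alpha>' @ [(i, x \<otimes> c)]) = wprod \<alpha> \<otimes> c"
      using alt u assms \<alpha>' \<open>x \<in> carrier G\<close> by (simp add: wprod_snoc m_assoc C_carrier)
    show "fst (hd (\<alpha>' @ [(i, x \<otimes> c)])) = fst (hd \<alpha>)"
      using \<alpha>' by (cases \<alpha>') auto
  qed
qed

lemma alternating_absorb_left:
  assumes "alternating ((i, x) # u)" and "c \<in> C"
  shows "alternating ((i, c \<otimes> x) # u)"
    and "wprod ((i, c \<otimes> x) # u) = c \<otimes> wprod ((i, x) # u)"
proof -
  have u: "alternating u" "i \<in> I" "x \<in> H i - C"
    using assms(1) by (auto simp: alternating_Cons)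
  then have "x \<in> carrier G"
    by blast
  with u assms show "alternating ((i, c \<otimes> x) # u)"
    by (auto simp: alternating_Cons)
  from u assms \<open>x \<in> carrier G\<close> show "wprod ((i, c \<otimes> x) # u) = c \<otimes> wprod ((i, x) # u)"
    by (simp add: m_assoc)
qed

lemma word_inv_snoc_letter:
  assumes "alternating \<beta>" and "\<beta> \<noteq> []"
  obtains \<beta>' j y where "\<beta> = \<beta>' @ [(j, y)]" "alternating ((j, inv y) # word_inv \<beta>')"
    "wprod ((j, inv y) # word_inv \<beta>') = inv (wprod \<beta>)"
    "fst (last ((j, inv y) # word_inv \<beta>')) = fst (hd \<beta>)"
proof -
  obtain \<beta>' j y where \<beta>': "\<beta> = \<beta>' @ [(j, y)]"
    using assms(2) by (cases \<beta> rule: rev_cases) auto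
  then have "word_inv \<beta> = (j, inv y) # word_inv \<beta>'"
    by simp
  with \<beta>' assms that show ?thesis
    using alternating_word_inv[OF assms(1)] wprod_word_inv[OF assms(1)] fst_last_word_inv[of \<beta>]
    by auto
qed

lemma fst_last_Cons_pair: "fst (last ((i, x) # u)) = fst (last ((i, y) # u))"
  by (cases u) auto

lemma alternating_join:
  assumes u: "alternating (u @ [(i, x)])" and v: "alternating ((j, y) # v)"
    and merge: "i = j \<Longrightarrow> x \<otimes> y \<notin> C"
  obtains \<gamma> where "alternating \<gamma>" "wprod \<gamma> = wprod (u @ [(i, x)]) \<otimes> wprod ((j, y) # v)"
    "length u + length v + 1 \<le> length \<gamma>" "length \<gamma> \<le> length u + length v + 2"
    "fst (hd \<gamma>) = fst (hd (u @ [(i, x)]))" "fst (last \<gamma>) = fst (last ((j, y) # v))"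
proof (cases "i = j")
  case False
  show ?thesis
  proof (rule that[of "(u @ [(i, x)]) @ (j, y) # v"])
    show "alternating ((u @ [(i, x)]) @ (j, y) # v)"
      using u v False by (subst alternating_append) simp
    show "wprod ((u @ [(i, x)]) @ (j, y) # v) = wprod (u @ [(i, x)]) \<otimes> wprod ((j, y) # v)"
      by (rule wprod_append[OF u v])
  qed (simp_all add: hd_append)
next
  case True
  have u': "alternating u" "i \<in> I" "x \<in> H i" "u \<noteq> [] \<longrightarrow> fst (last u) \<noteq> i"
    using u by (auto simp: alternating_append alternating_Cons)
  have v': "alternating v" "y \<in> H i" "v \<noteq> [] \<longrightarrow> i \<noteq> fst (hd v)"
    using v True by (auto simp: alternating_Cons)
  have xy: "x \<in> carrier G" "y \<in> carrier G"
    using u' v' by blast+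
  have "alternating ((i, x \<otimes> y) # v)"
    using u' v' merge True by (auto simp: alternating_Cons)
  with u' have alt: "alternating (u @ (i, x \<otimes> y) # v)"
    by (simp add: alternating_append)
  show ?thesis
  proof (rule that[OF alt])
    show "wprod (u @ (i, x \<otimes> y) # v) = wprod (u @ [(i, x)]) \<otimes> wprod ((j, y) # v)"
      using alt u v u' v' xy by (simp add: wprod_append alternating_append m_assoc)
    show "fst (last (u @ (i, x \<otimes> y) # v)) = fst (last ((j, y) # v))"
      using True fst_last_Cons_pair[of i "x \<otimes> y" v y] by simp
  qed (simp_all add: hd_append)
qed

lemma wprod_quotient_split:
  assumes "alternating (\<alpha> @ \<mu>)" and "alternating (\<beta> @ \<nu>)" and "e \<in> carrier G"
  shows "wprod (\<alpha> @ \<mu>) \<otimes> e \<otimes> inv (wprod (\<beta> @ \<nu>)) =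
    wprod \<alpha> \<otimes> (wprod \<mu> \<otimes> e \<otimes> inv (wprod \<nu>)) \<otimes> inv (wprod \<beta>)"
  using assms by (simp add: alternating_append wprod_append inv_mult_group m_assoc)

text \<open>\<open>\<mu>\<close> and \<open>\<nu>\<close> are the longest suffixes cancelling letter by letter modulo \<open>C\<close>;
  the last conclusion records maximality.\<close>
lemma cancel_suffixes:
  assumes "alternating w" and "alternating v" and "e \<in> C"
  obtains \<alpha> \<mu> \<beta> \<nu> where "w = \<alpha> @ \<mu>" "v = \<beta> @ \<nu>" "length \<mu> = length \<nu>"
    "wprod \<mu> \<otimes> e \<otimes> inv (wprod \<nu>) \<in> C"
    "\<alpha> \<noteq> [] \<Longrightarrow> \<beta> \<noteq> [] \<Longrightarrow> fst (last \<alpha>) = fst (last \<beta>) \<Longrightarrow>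
      snd (last \<alpha>) \<otimes> (wprod \<mu> \<otimes> e \<otimes> inv (wprod \<nu>)) \<otimes> inv (snd (last \<beta>)) \<notin> C"
proof -
  have "\<exists>\<alpha> \<mu> \<beta> \<nu>. w = \<alpha> @ \<mu> \<and> v = \<beta> @ \<nu> \<and> length \<mu> = length \<nu> \<and>
      wprod \<mu> \<otimes> e \<otimes> inv (wprod \<nu>) \<in> C \<and>
      (\<alpha> \<noteq> [] \<longrightarrow> \<beta> \<noteq> [] \<longrightarrow> fst (last \<alpha>) = fst (last \<beta>) \<longrightarrow>
        snd (last \<alpha>) \<otimes> (wprod \<mu> \<otimes> e \<otimes> inv (wprod \<nu>)) \<otimes> inv (snd (last \<beta>)) \<notin> C)"
    using assms
  proof (induction w arbitrary: v e rule: rev_induct)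
    case Nil
    then show ?case
      by (intro exI[of _ "[]"] exI[of _ v]) auto
  next
    case (snoc p w)
    show ?case
    proof (cases v rule: rev_cases)
      case Nil
      with snoc.prems show ?thesis
        by (intro exI[of _ "w @ [p]"] exI[of _ "[]"]) auto
    next
      case (snoc v' q)
      have pq: "snd p \<in> carrier G" "snd q \<in> carrier G"
        using snoc.prems letter_carrier snoc by auto
      show ?thesis
      proof (cases "fst p = fst q \<and> snd p \<otimes> e \<otimes> inv (snd q) \<in> C")
        case False
        with snoc.prems pq \<open>v = v' @ [q]\<close> show ?thesis
          by (intro exI[of _ "w @ [p]"] exI[of _ "[]"] exI[of _ v]) (auto simp: m_assoc)
      next
        case True
        have w': "alternating w" "alternating v'"
          using snoc.prems \<open>v = v' @ [q]\<close> by (auto simp: alternating_append)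
        obtain \<alpha> \<mu> \<beta> \<nu> where IH: "w = \<alpha> @ \<mu>" "v' = \<beta> @ \<nu>" "length \<mu> = length \<nu>"
          "wprod \<mu> \<otimes> (snd p \<otimes> e \<otimes> inv (snd q)) \<otimes> inv (wprod \<nu>) \<in> C"
          "\<alpha> \<noteq> [] \<longrightarrow> \<beta> \<noteq> [] \<longrightarrow> fst (last \<alpha>) = fst (last \<beta>) \<longrightarrow>
            snd (last \<alpha>) \<otimes> (wprod \<mu> \<otimes> (snd p \<otimes> e \<otimes> inv (snd q)) \<otimes> inv (wprod \<nu>)) \<otimes>
              inv (snd (last \<beta>)) \<notin> C"
          using snoc.IH[OF w' conjunct2[OF True]] by blast
        have \<mu>\<nu>: "alternating (\<mu> @ [p])" "alternating (\<nu> @ [q])"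
          using snoc.prems IH \<open>v = v' @ [q]\<close> by (auto simp: alternating_append)
        then have "wprod (\<mu> @ [p]) \<otimes> e \<otimes> inv (wprod (\<nu> @ [q])) =
            wprod \<mu> \<otimes> (snd p \<otimes> e \<otimes> inv (snd q)) \<otimes> inv (wprod \<nu>)"
          using pq snoc.prems by (simp add: wprod_snoc alternating_append inv_mult_group m_assoc)
        with IH \<open>v = v' @ [q]\<close> show ?thesis
          by (intro exI[of _ \<alpha>] exI[of _ "\<mu> @ [p]"] exI[of _ \<beta>] exI[of _ "\<nu> @ [q]"]) simp
      qed
    qed
  qed
  with that show ?thesis
    by blast
qed

lemma reduced_quotient:
  assumes \<alpha>: "alternating \<alpha>" and \<beta>: "alternating \<beta>" and d: "d \<in> C"
    and nonempty: "\<alpha> \<noteq> [] \<or> \<beta> \<noteq> []"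
    and junction: "\<alpha> \<noteq> [] \<Longrightarrow> \<beta> \<noteq> [] \<Longrightarrow> fst (last \<alpha>) = fst (last \<beta>) \<Longrightarrow>
      snd (last \<alpha>) \<otimes> d \<otimes> inv (snd (last \<beta>)) \<notin> C"
  obtains \<gamma> where "alternating \<gamma>" "\<gamma> \<noteq> []" "wprod \<gamma> = wprod \<alpha> \<otimes> d \<otimes> inv (wprod \<beta>)"
    "length \<gamma> \<le> length \<alpha> + length \<beta>"
    "fst (hd \<gamma>) = (if \<alpha> = [] then fst (last \<beta>) else fst (hd \<alpha>))"
    "fst (last \<gamma>) = (if \<beta> = [] then fst (last \<alpha>) else fst (hd \<beta>))"
proof -
  have dc: "d \<in> carrier G"
    using d by blast
  consider (right) "\<beta> = []" | (left) "\<alpha> = []" "\<beta> \<noteq> []" | (both) "\<alpha> \<noteq> []" "\<beta> \<noteq> []"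
    using nonempty by blast
  then show ?thesis
  proof cases
    case right
    with nonempty obtain \<alpha>' i x where
      "\<alpha> = \<alpha>' @ [(i, x)]" "alternating (\<alpha>' @ [(i, x \<otimes> d)])"
      "wprod (\<alpha>' @ [(i, x \<otimes> d)]) = wprod \<alpha> \<otimes> d" "fst (hd (\<alpha>' @ [(i, x \<otimes> d)])) = fst (hd \<alpha>)"
      using alternating_absorb_right[OF \<alpha> _ d] by blast
    with right \<alpha> dc show ?thesis
      by (intro that[of "\<alpha>' @ [(i, x \<otimes> d)]"]) auto
  next
    case left
    then obtain \<beta>' j y where \<beta>': "\<beta> = \<beta>' @ [(j, y)]"
      "alternating ((j, inv y) # word_inv \<beta>')" "wprod ((j, inv y) # word_inv \<beta>') = inv (wprod \<beta>)"
      "fst (last ((j, inv y) # word_inv \<beta>')) = fst (hd \<beta>)"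
      using word_inv_snoc_letter[OF \<beta>] by blast
    note absorbed = alternating_absorb_left[OF \<beta>'(2) d]
    from \<beta>'(3) have "wprod ((j, d \<otimes> inv y) # word_inv \<beta>') = \<one> \<otimes> d \<otimes> inv (wprod \<beta>)"
      unfolding absorbed(2) using dc by simp
    with left \<beta>' absorbed(1) show ?thesis
      by (intro that[of "(j, d \<otimes> inv y) # word_inv \<beta>'"])
        (auto simp: fst_last_Cons_pair[of j _ _ "inv y"])
  next
    case both
    obtain \<alpha>' i x where \<alpha>': "\<alpha> = \<alpha>' @ [(i, x)]"
      "alternating (\<alpha>' @ [(i, x \<otimes> d)])" "wprod (\<alpha>' @ [(i, x \<otimes> d)]) = wprod \<alpha> \<otimes> d"
      "fst (hd (\<alpha>' @ [(i, x \<otimes> d)])) = fst (hd \<alpha>)"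
      using alternating_absorb_right[OF \<alpha> both(1) d] by blast
    obtain \<beta>' j y where \<beta>': "\<beta> = \<beta>' @ [(j, y)]"
      "alternating ((j, inv y) # word_inv \<beta>')" "wprod ((j, inv y) # word_inv \<beta>') = inv (wprod \<beta>)"
      "fst (last ((j, inv y) # word_inv \<beta>')) = fst (hd \<beta>)"
      using word_inv_snoc_letter[OF \<beta> both(2)] by blast
    have "i = j \<Longrightarrow> x \<otimes> d \<otimes> inv y \<notin> C"
      using junction both \<alpha>'(1) \<beta>'(1) by simp
    then obtain \<gamma> where "alternating \<gamma>"
      "wprod \<gamma> = wprod (\<alpha>' @ [(i, x \<otimes> d)]) \<otimes> wprod ((j, inv y) # word_inv \<beta>')"
      "length \<alpha>' + length \<beta>' + 1 \<le> length \<gamma>" "length \<gamma> \<le> length \<alpha>' + length \<beta>' + 2"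
      "fst (hd \<gamma>) = fst (hd (\<alpha>' @ [(i, x \<otimes> d)]))" "fst (last \<gamma>) = fst (last ((j, inv y) # word_inv \<beta>'))"
      using alternating_join[OF \<alpha>'(2) \<beta>'(2)] by (metis word_inv_simps(4))
    with both \<alpha>' \<beta>' show ?thesis
      by (intro that[of \<gamma>]) auto
  qed
qed

lemma quotient_normal_form:
  assumes w: "alternating w" and v: "alternating v" and e: "e \<in> C"
  obtains (in_C) "wprod w \<otimes> e \<otimes> inv (wprod v) \<in> C" "length w = length v"
    | (reduced) \<gamma> where "alternating \<gamma>" "\<gamma> \<noteq> []"
      "wprod w \<otimes> e \<otimes> inv (wprod v) = wprod \<gamma>" "length \<gamma> \<le> length w + length v"
proof -
  obtain \<alpha> \<mu> \<beta> \<nu> where split: "w = \<alpha> @ \<mu>" "v = \<beta> @ \<nu>" "length \<mu> = length \<nu>"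
    and d: "wprod \<mu> \<otimes> e \<otimes> inv (wprod \<nu>) \<in> C"
    and junction: "\<alpha> \<noteq> [] \<Longrightarrow> \<beta> \<noteq> [] \<Longrightarrow> fst (last \<alpha>) = fst (last \<beta>) \<Longrightarrow>
      snd (last \<alpha>) \<otimes> (wprod \<mu> \<otimes> e \<otimes> inv (wprod \<nu>)) \<otimes> inv (snd (last \<beta>)) \<notin> C"
    using cancel_suffixes[OF w v e] by blast
  have \<alpha>\<beta>: "alternating \<alpha>" "alternating \<beta>" "alternating \<mu>" "alternating \<nu>"
    using w v split by (auto simp: alternating_append)
  have eq: "wprod w \<otimes> e \<otimes> inv (wprod v) = wprod \<alpha> \<otimes> (wprod \<mu> \<otimes> e \<otimes> inv (wprod \<nu>)) \<otimes> inv (wprod \<beta>)"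
    using wprod_quotient_split w v e split by blast
  show ?thesis
  proof (cases "\<alpha> = [] \<and> \<beta> = []")
    case True
    with eq d split show ?thesis
      using \<alpha>\<beta> by (intro in_C) auto
  next
    case False
    with reduced_quotient[OF \<alpha>\<beta>(1,2) d] junction obtain \<gamma> where
      "alternating \<gamma>" "\<gamma> \<noteq> []" "wprod \<gamma> = wprod w \<otimes> e \<otimes> inv (wprod v)"
      "length \<gamma> \<le> length \<alpha> + length \<beta>"
      unfolding eq by blast
    with split show ?thesis
      by (intro reduced[of \<gamma>]) auto
  qed
qed

lemma quotient_in_C_imp_length_eq:
  assumes "alternating w" "alternating v" "e \<in> C" "wprod w \<otimes> e \<otimes> inv (wprod v) \<in> C"
  shows "length w = length v"
  using assms alt_word_prod_notin_C by (cases rule: quotient_normal_form) auto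

lemma normal_form_exists:
  assumes "x \<in> carrier G"
  obtains c w where "c \<in> C" "alternating w" "x = c \<otimes> wprod w"
proof -
  have "x \<in> generate G (\<Union>i\<in>I. H i)"
    using assms generate_factors by simp
  then have "\<exists>c\<in>C. \<exists>w. alternating w \<and> x = c \<otimes> wprod w"
  proof (induction rule: generate.induct)
    case one
    show ?case
      by (intro bexI[of _ \<one>] exI[of _ "[]"]) auto
  next
    case (incl h)
    then obtain i where "i \<in> I" "h \<in> H i"
      by blast
    then have "h \<in> carrier G"
      by blast
    show ?case
    proof (cases "h \<in> C")
      case True
      with \<open>h \<in> carrier G\<close> show ?thesis
        by (intro bexI[of _ h] exI[of _ "[]"]) auto
    next
      case False
      with \<open>i \<in> I\<close> \<open>h \<in> H i\<close> \<open>h \<in> carrier G\<close> show ?thesis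
        by (intro bexI[of _ \<one>] exI[of _ "[(i, h)]"]) (auto simp: alternating_Cons)
    qed
  next
    case (inv h)
    then obtain i where "i \<in> I" "inv h \<in> H i" "inv h \<in> carrier G"
      by blast
    show ?case
    proof (cases "inv h \<in> C")
      case True
      with \<open>inv h \<in> carrier G\<close> show ?thesis
        by (intro bexI[of _ "inv h"] exI[of _ "[]"]) auto
    next
      case False
      with \<open>i \<in> I\<close> \<open>inv h \<in> H i\<close> \<open>inv h \<in> carrier G\<close> show ?thesis
        by (intro bexI[of _ \<one>] exI[of _ "[(i, inv h)]"]) (auto simp: alternating_Cons)
    qed
  next
    case (eng h1 h2)
    then obtain c1 w1 c2 w2 where h: "c1 \<in> C" "alternating w1" "h1 = c1 \<otimes> wprod w1"
      "c2 \<in> C" "alternating w2" "h2 = c2 \<otimes> wprod w2"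
      by blast
    then have prod: "h1 \<otimes> h2 = c1 \<otimes> (wprod w1 \<otimes> c2 \<otimes> inv (wprod (word_inv w2)))"
      by (simp add: wprod_word_inv C_carrier m_assoc)
    from h(2) alternating_word_inv[OF h(5)] h(4) show ?case
    proof (cases rule: quotient_normal_form)
      case in_C
      with h(1) prod show ?thesis
        by (intro bexI[of _ "h1 \<otimes> h2"] exI[of _ "[]"]) (auto simp: C_carrier)
    next
      case (reduced \<gamma>)
      with h(1) prod show ?thesis
        by (intro bexI[of _ c1] exI[of _ \<gamma>]) auto
    qed
  qed
  with that show ?thesis
    by blast
qed

lemma representation_length_eq:
  assumes "c \<in> C" "c' \<in> C" "c'' \<in> C" "alternating w" "alternating v"
    and "c \<otimes> wprod w \<otimes> c' = c'' \<otimes> wprod v"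
  shows "length v = length w"
proof -
  have "wprod w \<otimes> c' \<otimes> inv (wprod v) = inv c \<otimes> (c \<otimes> wprod w \<otimes> c') \<otimes> inv (wprod v)"
    using assms(1-5) by (simp add: m_assoc[symmetric] C_carrier)
  also have "\<dots> = inv c \<otimes> (c'' \<otimes> wprod v) \<otimes> inv (wprod v)"
    by (simp only: assms(6))
  also have "\<dots> = inv c \<otimes> c''"
    using assms by (simp add: m_assoc C_carrier)
  finally have "wprod w \<otimes> c' \<otimes> inv (wprod v) = inv c \<otimes> c''" .
  then show ?thesis
    using quotient_in_C_imp_length_eq assms by (metis C.m_closed C.m_inv_closed)
qed

lemma len_eq:
  assumes "c \<in> C" "c' \<in> C" "alternating w"
  shows "len (c \<otimes> wprod w \<otimes> c') = length w"
  unfolding amalg_len_def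
proof (rule Least_equality)
  obtain c'' v where "c'' \<in> C" "alternating v" "c \<otimes> wprod w \<otimes> c' = c'' \<otimes> wprod v"
    using normal_form_exists assms by (metis C_carrier m_closed wprod_closed)
  with representation_length_eq assms
  show "\<exists>c''\<in>C. \<exists>v. alternating v \<and> length v = length w \<and> c \<otimes> wprod w \<otimes> c' = c'' \<otimes> wprod v"
    by metis
next
  fix m
  assume "\<exists>c''\<in>C. \<exists>v. alternating v \<and> length v = m \<and> c \<otimes> wprod w \<otimes> c' = c'' \<otimes> wprod v"
  with representation_length_eq assms show "length w \<le> m"
    by fastforce
qed

lemma len_normal_form: "c \<in> C \<Longrightarrow> alternating w \<Longrightarrow> len (c \<otimes> wprod w) = length w"
  using len_eq[of c \<one> w] by (simp add: C_carrier)

lemma len_wprod: "alternating w \<Longrightarrow> len (wprod w) = length w"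
  using len_normal_form[of \<one> w] by simp

lemma len_C: "c \<in> C \<Longrightarrow> len c = 0"
  using len_normal_form[of c "[]"] by (simp add: C_carrier)

lemma len_letter: "i \<in> I \<Longrightarrow> x \<in> H i - C \<Longrightarrow> len x = 1"
  using len_wprod[of "[(i, x)]"] H_carrier[of i x] by (auto simp: alternating_Cons)

lemma len_H_le: "i \<in> I \<Longrightarrow> x \<in> H i \<Longrightarrow> len x \<le> 1"
  using len_C len_letter by (cases "x \<in> C") auto

lemma len_inv: "c \<in> C \<Longrightarrow> alternating w \<Longrightarrow> len (inv (c \<otimes> wprod w)) = length w"
  using len_eq[of \<one> "inv c" "word_inv w"]
  by (simp add: inv_mult_group C_carrier wprod_word_inv alternating_word_inv)

lemma len_mult_le:
  assumes "x \<in> carrier G" "y \<in> carrier G"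
  shows "len (x \<otimes> y) \<le> len x + len y"
proof -
  obtain c1 w1 c2 w2 where h: "c1 \<in> C" "alternating w1" "x = c1 \<otimes> wprod w1"
    "c2 \<in> C" "alternating w2" "y = c2 \<otimes> wprod w2"
    using normal_form_exists assms by metis
  then have xy: "x \<otimes> y = c1 \<otimes> (wprod w1 \<otimes> c2 \<otimes> inv (wprod (word_inv w2)))"
    by (simp add: wprod_word_inv C_carrier m_assoc)
  from h(2) alternating_word_inv[OF h(5)] h(4) show ?thesis
  proof (cases rule: quotient_normal_form)
    case in_C
    then show ?thesis
      using xy h(1) len_C by simp
  next
    case (reduced \<gamma>)
    then show ?thesis
      using xy h len_normal_form by simp
  qed
qed

lemma len_1_imp_letter:
  assumes "x \<in> carrier G" "len x = 1"
  obtains i where "i \<in> I" "x \<in> H i - C"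
proof -
  obtain c w where w: "c \<in> C" "alternating w" "x = c \<otimes> wprod w"
    using normal_form_exists assms(1) by blast
  with assms(2) have "length w = 1"
    using len_normal_form by simp
  then obtain i y where "w = [(i, y)]"
    by (auto simp: length_Suc_conv)
  with w have "i \<in> I" "y \<in> H i - C" "x = c \<otimes> y"
    using H_carrier[of i y] by (auto simp: alternating_Cons)
  with w(1) that show ?thesis
    by (simp add: C_in_H H_mult_closed H_carrier)
qed

lemma left_factor_prefix:
  assumes "alternating (w1 @ w2)" "c \<in> C"
  shows "left_factor G I H C (wprod w1) (wprod (w1 @ w2) \<otimes> c)"
proof -
  have w: "alternating w1" "alternating w2"
    using assms(1) by (auto simp: alternating_append)
  then have "wprod (w1 @ w2) \<otimes> c = wprod w1 \<otimes> (wprod w2 \<otimes> c)"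
    using assms(2) by (simp add: wprod_append m_assoc C_carrier)
  moreover have "len (wprod (w1 @ w2) \<otimes> c) = len (wprod w1) + len (wprod w2 \<otimes> c)"
    using len_eq[of \<one> c] len_wprod assms w by (simp add: C_carrier)
  ultimately show ?thesis
    unfolding left_factor_def using w assms(2) by (auto simp: C_carrier)
qed

lemma right_factor_suffix:
  assumes "alternating (w1 @ w2)" "c \<in> C"
  shows "right_factor G I H C (wprod w2) (c \<otimes> wprod (w1 @ w2))"
proof -
  have w: "alternating w1" "alternating w2"
    using assms(1) by (auto simp: alternating_append)
  then have "c \<otimes> wprod (w1 @ w2) = (c \<otimes> wprod w1) \<otimes> wprod w2"
    using assms(2) by (simp add: wprod_append m_assoc C_carrier)
  moreover have "len (c \<otimes> wprod (w1 @ w2)) = len (c \<otimes> wprod w1) + len (wprod w2)"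
    using len_normal_form len_wprod assms w by simp
  ultimately show ?thesis
    unfolding right_factor_def using w assms(2) by (auto simp: C_carrier)
qed

end

lemma ext_seq_eq [simp]: "1 \<le> k \<Longrightarrow> k \<le> n \<Longrightarrow> ext_seq G n f k = f k"
  by (simp add: ext_seq_def)

locale tamed_conjugates = amalgam G I H C
  for G :: "('a, 'b) monoid_scheme" (structure) and I :: "'i set" and H C +
  fixes n :: nat and t g :: "nat \<Rightarrow> 'a"
  assumes n_pos: "1 \<le> n"
    and tg_carrier: "\<forall>i\<in>{1..n}. t i \<in> carrier G \<and> g i \<in> carrier G"
    and tamed: "tamed G I H C n t g"
begin

lemma t_carrier [simp]: "k \<in> {1..n} \<Longrightarrow> t k \<in> carrier G"
  and g_carrier [simp]: "k \<in> {1..n} \<Longrightarrow> g k \<in> carrier G"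
  using tg_carrier by auto

lemma len_t: "k \<in> {1..n} \<Longrightarrow> len (t k) = 1"
  and len_conj_reduced:
    "k \<in> {1..n} \<Longrightarrow> len (inv g k \<otimes> t k \<otimes> g k) = len (inv g k) + len (t k) + len (g k)"
  and len_t_adjacent:
    "k \<in> {1..<n} \<Longrightarrow> len (g k \<otimes> inv g (k + 1)) = 0 \<Longrightarrow> len (t k \<otimes> t (k + 1)) = 2"
  using tamed unfolding tamed_def by blast+

lemma no_right_cancellation:
  "k \<in> {1..n} \<Longrightarrow> right_factor G I H C R (ext_seq G n g (k - 1)) \<Longrightarrow> R \<otimes> inv g k \<otimes> t k \<notin> C"
  and no_left_cancellation:
  "k \<in> {1..n} \<Longrightarrow> left_factor G I H C L (inv ext_seq G n g (k + 1)) \<Longrightarrow> t k \<otimes> g k \<otimes> L \<notin> C"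
  and no_two_sided_cancellation:
  "k \<in> {1..n} \<Longrightarrow> right_factor G I H C R (ext_seq G n g (k - 1)) \<Longrightarrow>
    left_factor G I H C L (inv ext_seq G n g (k + 1)) \<Longrightarrow> R \<otimes> inv g k \<otimes> t k \<otimes> g k \<otimes> L \<notin> C"
  using tamed unfolding tamed_def cancellable_def Let_def by auto

definition tfactor :: "nat \<Rightarrow> 'i" where
  "tfactor k = (SOME j. j \<in> I \<and> t k \<in> H j - C)"

lemma tfactor_spec: "k \<in> {1..n} \<Longrightarrow> tfactor k \<in> I \<and> t k \<in> H (tfactor k) - C"
  unfolding tfactor_def
  using len_1_imp_letter[OF t_carrier len_t] by (metis (mono_tags, lifting) someI_ex)

lemma first_letter_not_tfactor:
  assumes k: "k \<in> {1..n}" and w: "c \<in> C" "alternating w" "g k = c \<otimes> wprod w" and "w \<noteq> []"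
  shows "fst (hd w) \<noteq> tfactor k"
proof
  assume same: "fst (hd w) = tfactor k"
  obtain m y w' where w': "w = (m, y) # w'"
    using \<open>w \<noteq> []\<close> by (cases w) auto
  have my: "m \<in> I" "y \<in> H m" "alternating w'"
    using w(2) w' by (auto simp: alternating_Cons)
  have tk: "t k \<in> H m"
    using tfactor_spec[OF k] same w' by simp
  have carr: "c \<in> carrier G" "y \<in> carrier G" "t k \<in> carrier G"
    using w(1) H_carrier[OF my(1,2)] k by auto
  define z where "z = inv y \<otimes> inv c \<otimes> t k \<otimes> c \<otimes> y"
  have z: "z \<in> H m"
    unfolding z_def using my(1,2) tk C_in_H[OF my(1) w(1)] by (simp add: H_mult_closed H_inv_closed)
  have "inv g k \<otimes> t k \<otimes> g k = wprod (word_inv w') \<otimes> z \<otimes> wprod w'"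
    using carr my(3) unfolding w(3) w' z_def
    by (simp add: wprod_word_inv inv_mult_group m_assoc)
  have wi: "alternating (word_inv w')"
    using alternating_word_inv[OF my(3)] .
  have zc: "z \<in> carrier G"
    using H_carrier[OF my(1) z] .
  have "len (wprod (word_inv w') \<otimes> z \<otimes> wprod w') \<le> len (wprod (word_inv w') \<otimes> z) + len (wprod w')"
    using len_mult_le wi zc my(3) by simp
  also have "\<dots> \<le> len (wprod (word_inv w')) + len z + len (wprod w')"
    using len_mult_le wi zc by simp
  also have "\<dots> \<le> length w' + 1 + length w'"
    using len_wprod wi my(3) len_H_le[OF my(1) z] by simp
  finally have "len (inv g k \<otimes> t k \<otimes> g k) \<le> length w' + 1 + length w'"
    using \<open>inv g k \<otimes> t k \<otimes> g k = _\<close> by simp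
  moreover have "len (inv g k \<otimes> t k \<otimes> g k) = length w + 1 + length w"
    using len_conj_reduced[OF k] len_t[OF k] len_normal_form[OF w(1,2)] len_inv[OF w(1,2)]
    unfolding w(3) by simp
  ultimately show False
    using w' by simp
qed

lemma tfactor_adjacent_distinct:
  assumes k: "k \<in> {1..<n}" and "g k \<otimes> inv g (Suc k) \<in> C"
  shows "tfactor k \<noteq> tfactor (Suc k)"
proof
  assume same: "tfactor k = tfactor (Suc k)"
  have k': "k \<in> {1..n}" "Suc k \<in> {1..n}"
    using k by auto
  have "len (t k \<otimes> t (Suc k)) = 2"
    using len_t_adjacent[OF k] len_C assms(2) by simp
  moreover have "t k \<otimes> t (Suc k) \<in> H (tfactor k)"
    using tfactor_spec[OF k'(1)] tfactor_spec[OF k'(2)] same by auto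
  ultimately show False
    using len_H_le tfactor_spec[OF k'(1)] by fastforce
qed

text \<open>Invariant of the induction on \<open>k\<close>: \<open>t\<^sub>1\<^bsup>g\<^sub>1\<^esup> \<cdots> t\<^sub>k\<^bsup>g\<^sub>k\<^esup>\<close> is the reduced word \<open>q\<close>,
  followed by the letter \<open>r t\<^sub>k\<close>, followed by \<open>g\<^sub>k\<close>.  Here \<open>r\<close> is the part of
  \<open>g\<^sub>k\<^sub>-\<^sub>1 g\<^sub>k\<^sup>-\<^sup>1\<close> swallowed by \<open>t\<^sub>k\<close>; remembering its origin is what lets the
  non-cancellability conditions apply in the next step.\<close>
definition tail_form :: "nat \<Rightarrow> ('i \<times> 'a) list \<Rightarrow> 'a \<Rightarrow> bool" where
  "tail_form k q r \<longleftrightarrow> alternating q \<and> (q \<noteq> [] \<longrightarrow> fst (last q) \<noteq> tfactor k) \<and>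
    r \<in> H (tfactor k) \<and> r \<otimes> t k \<notin> C \<and>
    (r \<in> C \<or> (\<exists>R. right_factor G I H C R (ext_seq G n g (k - 1)) \<and> r = R \<otimes> inv g k)) \<and>
    conj_prod G k t g = wprod q \<otimes> r \<otimes> t k \<otimes> g k"

lemma tail_form_first:
  obtains q r where "tail_form 1 q r" "length q = len (g 1)"
proof -
  have one: "1 \<in> {1..n}"
    using n_pos by simp
  obtain c w where w: "c \<in> C" "alternating w" "g 1 = c \<otimes> wprod w"
    using normal_form_exists[OF g_carrier[OF one]] by blast
  have c: "inv c \<in> C" "inv c \<in> carrier G" "c \<in> carrier G"
    using w(1) by blast+
  have "tail_form 1 (word_inv w) (inv c)"
    unfolding tail_form_def
  proof (intro conjI)
    show "alternating (word_inv w)"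
      using alternating_word_inv[OF w(2)] .
    show "word_inv w \<noteq> [] \<longrightarrow> fst (last (word_inv w)) \<noteq> tfactor 1"
      using first_letter_not_tfactor[OF one w] fst_last_word_inv by auto
    show "inv c \<in> H (tfactor 1)" "inv c \<otimes> t 1 \<notin> C"
      using tfactor_spec[OF one] c one by auto
    show "inv c \<in> C \<or> (\<exists>R. right_factor G I H C R (ext_seq G n g (1 - 1)) \<and> inv c = R \<otimes> inv g 1)"
      using c by simp
    show "conj_prod G 1 t g = wprod (word_inv w) \<otimes> inv c \<otimes> t 1 \<otimes> g 1"
      using c w one by (simp add: conj_prod_def wprod_word_inv inv_mult_group m_assoc)
  qed
  with that show ?thesis
    using len_normal_form[OF w(1,2)] w(3) by simp
qed

lemma tail_form_last:
  assumes "tail_form n q r"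
  shows "len (conj_prod G n t g) = length q + 1 + len (g n)"
proof -
  have last: "n \<in> {1..n}"
    using n_pos by simp
  have q: "alternating q" "q \<noteq> [] \<longrightarrow> fst (last q) \<noteq> tfactor n" "r \<in> H (tfactor n)"
    "r \<otimes> t n \<notin> C" "conj_prod G n t g = wprod q \<otimes> r \<otimes> t n \<otimes> g n"
    using assms unfolding tail_form_def by blast+
  obtain c w where w: "c \<in> C" "alternating w" "g n = c \<otimes> wprod w"
    using normal_form_exists[OF g_carrier[OF last]] by blast
  have j: "tfactor n \<in> I" "t n \<in> H (tfactor n)"
    using tfactor_spec[OF last] by auto
  have carr: "c \<in> carrier G" "r \<in> carrier G" "t n \<in> carrier G"
    using w(1) q(3) j by blast+
  define z where "z = r \<otimes> t n \<otimes> c"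
  have z: "z \<in> H (tfactor n) - C"
    unfolding z_def using j q(3,4) w(1) carr by auto
  have "alternating (q @ (tfactor n, z) # w)"
    using q(1,2) z j(1) w(2) first_letter_not_tfactor[OF last w]
    by (auto simp: alternating_append alternating_Cons)
  moreover have "conj_prod G n t g = wprod (q @ (tfactor n, z) # w)"
    using calculation q(1,5) w(2,3) carr
    by (simp add: wprod_append alternating_append z_def m_assoc)
  ultimately show ?thesis
    using len_wprod len_normal_form[OF w(1,2)] w(3) by simp
qed

end

text \<open>Splitting the normal forms of \<open>g\<^sub>k\<close> and \<open>g\<^sub>k\<^sub>+\<^sub>1\<close> at their
  maximal cancellation gives \<open>g\<^sub>k g\<^sub>k\<^sub>+\<^sub>1\<^sup>-\<^sup>1 = ck \<alpha> d \<beta>\<^sup>-\<^sup>1 ck'\<^sup>-\<^sup>1\<close>, which is inserted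
  between the letter of \<open>t\<^sub>k\<close> and \<open>t\<^sub>k\<^sub>+\<^sub>1\<close>.\<close>
locale tamed_step = tamed_conjugates G I H C n t g
  for G :: "('a, 'b) monoid_scheme" (structure) and I :: "'i set" and H C n t g +
  fixes k :: nat and q :: "('i \<times> 'a) list" and r :: 'a
    and ck ck' :: 'a and w v \<alpha> \<mu> \<beta> \<nu> :: "('i \<times> 'a) list"
  assumes k: "1 \<le> k" "k < n"
    and tail: "tail_form k q r"
    and g_k: "ck \<in> C" "alternating w" "g k = ck \<otimes> wprod w"
    and g_Suc_k: "ck' \<in> C" "alternating v" "g (Suc k) = ck' \<otimes> wprod v"
    and split: "w = \<alpha> @ \<mu>" "v = \<beta> @ \<nu>" "wprod \<mu> \<otimes> inv (wprod \<nu>) \<in> C"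
    and junction: "\<alpha> \<noteq> [] \<Longrightarrow> \<beta> \<noteq> [] \<Longrightarrow> fst (last \<alpha>) = fst (last \<beta>) \<Longrightarrow>
      snd (last \<alpha>) \<otimes> (wprod \<mu> \<otimes> inv (wprod \<nu>)) \<otimes> inv (snd (last \<beta>)) \<notin> C"
begin

abbreviation j :: 'i where "j \<equiv> tfactor k"
abbreviation j' :: 'i where "j' \<equiv> tfactor (Suc k)"
abbreviation d :: 'a where "d \<equiv> wprod \<mu> \<otimes> inv (wprod \<nu>)"
abbreviation T :: 'a where "T \<equiv> r \<otimes> t k \<otimes> ck"

lemma k_range: "k \<in> {1..n}" "Suc k \<in> {1..n}" "k \<in> {1..<n}"
  using k by auto

lemma tfactors: "j \<in> I" "t k \<in> H j - C" "j' \<in> I" "t (Suc k) \<in> H j' - C"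
  using tfactor_spec k_range by auto

lemma tail_facts: "alternating q" "q \<noteq> [] \<Longrightarrow> fst (last q) \<noteq> j" "r \<in> H j" "r \<otimes> t k \<notin> C"
  "r \<in> C \<or> (\<exists>R. right_factor G I H C R (ext_seq G n g (k - 1)) \<and> r = R \<otimes> inv g k)"
  "conj_prod G k t g = wprod q \<otimes> r \<otimes> t k \<otimes> g k"
  using tail unfolding tail_form_def by blast+

lemma words: "alternating \<alpha>" "alternating \<mu>" "alternating \<beta>" "alternating \<nu>"
  using g_k(2) g_Suc_k(2) split by (auto simp: alternating_append)

lemma carriers: "ck \<in> carrier G" "ck' \<in> carrier G" "r \<in> carrier G" "d \<in> carrier G"
  "t k \<in> carrier G" "t (Suc k) \<in> carrier G"
  using g_k(1) g_Suc_k(1) tail_facts(3) tfactors(1) split(3) k_range by auto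

lemma T_letter: "T \<in> H j - C"
  using tail_facts(3,4) tfactors(1,2) g_k(1) carriers by auto

lemma first_letters: "\<alpha> \<noteq> [] \<Longrightarrow> fst (hd \<alpha>) \<noteq> j" "\<beta> \<noteq> [] \<Longrightarrow> fst (hd \<beta>) \<noteq> j'"
  using first_letter_not_tfactor[OF k_range(1) g_k] first_letter_not_tfactor[OF k_range(2) g_Suc_k] split
  by auto

lemma g_quotient: "g k \<otimes> inv g (Suc k) = ck \<otimes> (wprod \<alpha> \<otimes> d \<otimes> inv (wprod \<beta>)) \<otimes> inv ck'"
proof -
  have "g k \<otimes> inv g (Suc k) = ck \<otimes> (wprod (\<alpha> @ \<mu>) \<otimes> \<one> \<otimes> inv (wprod (\<beta> @ \<nu>))) \<otimes> inv ck'"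
    using g_k g_Suc_k split carriers by (simp add: inv_mult_group m_assoc)
  also have "\<dots> = ck \<otimes> (wprod \<alpha> \<otimes> d \<otimes> inv (wprod \<beta>)) \<otimes> inv ck'"
    unfolding wprod_quotient_split[of \<alpha> \<mu> \<beta> \<nu> \<one>, OF g_k(2)[unfolded split] g_Suc_k(2)[unfolded split] one_closed]
    using words by simp
  finally show ?thesis .
qed

lemma conj_prod_Suc_k:
  "conj_prod G (Suc k) t g =
    wprod q \<otimes> T \<otimes> (wprod \<alpha> \<otimes> d \<otimes> inv (wprod \<beta>)) \<otimes> inv ck' \<otimes> t (Suc k) \<otimes> g (Suc k)"
proof -
  have "conj_prod G (Suc k) t g = wprod q \<otimes> r \<otimes> t k \<otimes> (g k \<otimes> inv g (Suc k)) \<otimes> t (Suc k) \<otimes> g (Suc k)"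
    using conj_prod_Suc[of k t g] tg_carrier k tail_facts(1,6) carriers k_range by (simp add: m_assoc)
  moreover have "wprod \<alpha> \<otimes> d \<otimes> inv (wprod \<beta>) \<in> carrier G"
    using words carriers by simp
  ultimately show ?thesis
    unfolding g_quotient using tail_facts(1) carriers by (simp add: m_assoc)
qed

lemma tail_form_Suc_intro:
  assumes "alternating q'" "q' \<noteq> [] \<Longrightarrow> fst (last q') \<noteq> j'" "r' \<in> H j'" "r' \<otimes> t (Suc k) \<notin> C"
    and "r' \<in> C \<or> (\<exists>R. right_factor G I H C R (g k) \<and> r' = R \<otimes> inv g (Suc k))"
    and "wprod q' \<otimes> r' = wprod q \<otimes> T \<otimes> (wprod \<alpha> \<otimes> d \<otimes> inv (wprod \<beta>)) \<otimes> inv ck'"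
  shows "tail_form (Suc k) q' r'"
  using assms conj_prod_Suc_k k unfolding tail_form_def by simp

lemma tail_form_Suc_intro_C:
  assumes "r' \<in> C" "alternating q'" "q' \<noteq> [] \<Longrightarrow> fst (last q') \<noteq> j'"
    and "wprod q' \<otimes> r' = wprod q \<otimes> T \<otimes> (wprod \<alpha> \<otimes> d \<otimes> inv (wprod \<beta>)) \<otimes> inv ck'"
  shows "tail_form (Suc k) q' r'"
  using assms tfactors(3,4) carriers by (intro tail_form_Suc_intro) auto

lemma step_cancelled:
  assumes "\<alpha> = []" "\<beta> = []"
  shows "\<exists>q' r'. tail_form (Suc k) q' r' \<and> length q < length q'"
proof -
  have "g k \<otimes> inv g (Suc k) \<in> C"
    unfolding g_quotient using assms g_k(1) g_Suc_k(1) split(3) by simp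
  then have jj: "j \<noteq> j'"
    using tfactor_adjacent_distinct[OF k_range(3)] by blast
  let ?z = "T \<otimes> d \<otimes> inv ck'"
  have z: "?z \<in> H j - C"
    using T_letter tfactors(1) split(3) g_Suc_k(1) carriers by auto
  have "tail_form (Suc k) (q @ [(j, ?z)]) \<one>"
  proof (rule tail_form_Suc_intro_C)
    show "alternating (q @ [(j, ?z)])"
      using tail_facts(1,2) z tfactors(1) by (auto simp: alternating_append alternating_Cons)
    show "wprod (q @ [(j, ?z)]) \<otimes> \<one> = wprod q \<otimes> T \<otimes> (wprod \<alpha> \<otimes> d \<otimes> inv (wprod \<beta>)) \<otimes> inv ck'"
      using assms tail_facts(1) z tfactors(1) T_letter carriers by (auto simp: wprod_append alternating_Cons m_assoc)
  qed (use jj in auto)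
  then show ?thesis
    by fastforce
qed

lemma step_unmerged:
  assumes "\<beta> \<noteq> []" and "\<alpha> = [] \<Longrightarrow> fst (last \<beta>) \<noteq> j"
  shows "\<exists>q' r'. tail_form (Suc k) q' r' \<and> length q < length q'"
proof -
  have "\<alpha> \<noteq> [] \<or> \<beta> \<noteq> []"
    using assms(1) by simp
  then obtain \<gamma> where \<gamma>: "alternating \<gamma>" "\<gamma> \<noteq> []" "wprod \<gamma> = wprod \<alpha> \<otimes> d \<otimes> inv (wprod \<beta>)"
    "length \<gamma> \<le> length \<alpha> + length \<beta>"
    "fst (hd \<gamma>) = (if \<alpha> = [] then fst (last \<beta>) else fst (hd \<alpha>))"
    "fst (last \<gamma>) = (if \<beta> = [] then fst (last \<alpha>) else fst (hd \<beta>))"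
    using reduced_quotient[OF words(1,3) split(3) _ junction] by blast
  have alt: "alternating (q @ (j, T) # \<gamma>)"
    using tail_facts(1,2) T_letter tfactors(1) \<gamma>(1,2,5) assms(2) first_letters(1)
    by (auto simp: alternating_append alternating_Cons split: if_splits)
  have "tail_form (Suc k) (q @ (j, T) # \<gamma>) (inv ck')"
  proof (rule tail_form_Suc_intro_C)
    show "q @ (j, T) # \<gamma> \<noteq> [] \<Longrightarrow> fst (last (q @ (j, T) # \<gamma>)) \<noteq> j'"
      using \<gamma>(2,6) assms(1) first_letters(2) by simp
    show "wprod (q @ (j, T) # \<gamma>) \<otimes> inv ck' = wprod q \<otimes> T \<otimes> (wprod \<alpha> \<otimes> d \<otimes> inv (wprod \<beta>)) \<otimes> inv ck'"
      using alt \<gamma>(3) carriers words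
      by (simp add: wprod_append alternating_append m_assoc)
  qed (use alt g_Suc_k(1) in simp_all)
  then show ?thesis
    by fastforce
qed

text \<open>If the letter of \<open>t\<^sub>k\<close> swallows the last letter \<open>(j, y)\<close> of \<open>\<beta>\<close>, the merged
  letter is \<open>r t\<^sub>k g\<^sub>k L\<close> for a left factor \<open>L\<close> of \<open>g\<^sub>k\<^sub>+\<^sub>1\<^sup>-\<^sup>1\<close>, so conditions (2) and (3)
  of non-cancellability keep it out of \<open>C\<close>.\<close>
lemma merged_letter_notin_C:
  assumes "\<alpha> = []" and \<beta>': "\<beta> = \<beta>' @ [(j, y)]"
  shows "T \<otimes> (d \<otimes> inv y) \<notin> C"
proof
  assume in_C: "T \<otimes> (d \<otimes> inv y) \<in> C"
  have y: "y \<in> carrier G"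
    using words(3) \<beta>' tfactors(1) by (auto simp: alternating_append alternating_Cons)
  define L where "L = wprod (word_inv \<nu> @ [(j, inv y)])"
  have v_inv: "word_inv v = (word_inv \<nu> @ [(j, inv y)]) @ word_inv \<beta>'"
    using split(2) \<beta>' by simp
  have "left_factor G I H C L (wprod ((word_inv \<nu> @ [(j, inv y)]) @ word_inv \<beta>') \<otimes> inv ck')"
    unfolding L_def using alternating_word_inv[OF g_Suc_k(2)] g_Suc_k(1)
    by (intro left_factor_prefix) (simp_all only: v_inv C.m_inv_closed)
  then have "left_factor G I H C L (wprod (word_inv v) \<otimes> inv ck')"
    by (simp only: v_inv)
  then have L: "left_factor G I H C L (inv ext_seq G n g (k + 1))"
    using g_Suc_k k carriers by (simp add: inv_mult_group wprod_word_inv)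
  have "alternating ((word_inv \<nu> @ [(j, inv y)]) @ word_inv \<beta>')"
    using alternating_word_inv[OF g_Suc_k(2)] by (simp only: v_inv)
  then have "alternating (word_inv \<nu> @ [(j, inv y)])"
    by (rule conjunct1[OF iffD1[OF alternating_append]])
  then have L_eq: "L = inv (wprod \<nu>) \<otimes> inv y"
    unfolding L_def using words(4) by (simp add: wprod_snoc wprod_word_inv)
  have Lc: "L \<in> carrier G"
    using L_eq words y by simp
  have merged: "T \<otimes> (d \<otimes> inv y) = r \<otimes> (t k \<otimes> g k \<otimes> L)"
    unfolding L_eq g_k(3) split(1) assms(1) using carriers words y by (simp add: m_assoc)
  from tail_facts(5) show False
  proof
    assume "r \<in> C"
    with in_C merged have "t k \<otimes> g k \<otimes> L \<in> C"
      using carriers Lc k_range by simp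
    with no_left_cancellation[OF k_range(1) L] show False ..
  next
    assume "\<exists>R. right_factor G I H C R (ext_seq G n g (k - 1)) \<and> r = R \<otimes> inv g k"
    then obtain R where R: "right_factor G I H C R (ext_seq G n g (k - 1))" "r = R \<otimes> inv g k"
      by blast
    then have "R \<in> carrier G"
      by (simp add: right_factor_def)
    then have "R \<otimes> inv g k \<otimes> t k \<otimes> g k \<otimes> L = r \<otimes> (t k \<otimes> g k \<otimes> L)"
      using R(2) carriers Lc k_range by (simp add: m_assoc)
    with in_C merged have "R \<otimes> inv g k \<otimes> t k \<otimes> g k \<otimes> L \<in> C"
      by simp
    with no_two_sided_cancellation[OF k_range(1) R(1) L] show False ..
  qed
qed

lemma step_merging:
  assumes "\<alpha> = []" "\<beta> \<noteq> []" "fst (last \<beta>) = j"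
  shows "\<exists>q' r'. tail_form (Suc k) q' r' \<and> length q < length q'"
proof -
  obtain \<beta>' y where \<beta>': "\<beta> = \<beta>' @ [(j, y)]"
    "alternating ((j, inv y) # word_inv \<beta>')" "wprod ((j, inv y) # word_inv \<beta>') = inv (wprod \<beta>)"
    "fst (last ((j, inv y) # word_inv \<beta>')) = fst (hd \<beta>)"
    using word_inv_snoc_letter[OF words(3) assms(2)] assms(3) by (metis fst_conv last_snoc)
  note absorbed = alternating_absorb_left[OF \<beta>'(2) split(3)]
  have q_T: "alternating (q @ [(j, T)])"
    using tail_facts(1,2) T_letter tfactors(1) by (auto simp: alternating_append alternating_Cons)
  obtain \<gamma> where \<gamma>: "alternating \<gamma>"
    "wprod \<gamma> = wprod (q @ [(j, T)]) \<otimes> wprod ((j, d \<otimes> inv y) # word_inv \<beta>')"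
    "length q + length (word_inv \<beta>') + 1 \<le> length \<gamma>"
    "fst (last \<gamma>) = fst (last ((j, d \<otimes> inv y) # word_inv \<beta>'))"
    using alternating_join[OF q_T absorbed(1)] merged_letter_notin_C[OF assms(1) \<beta>'(1)] by metis
  have "tail_form (Suc k) \<gamma> (inv ck')"
  proof (rule tail_form_Suc_intro_C)
    show "\<gamma> \<noteq> [] \<Longrightarrow> fst (last \<gamma>) \<noteq> j'"
      using \<gamma>(4) \<beta>'(4) first_letters(2) assms(2) by (metis fst_last_Cons_pair)
    show "wprod \<gamma> \<otimes> inv ck' = wprod q \<otimes> T \<otimes> (wprod \<alpha> \<otimes> d \<otimes> inv (wprod \<beta>)) \<otimes> inv ck'"
      unfolding \<gamma>(2) absorbed(2) \<beta>'(3) using q_T tail_facts(1) assms(1) words carriers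
      by (simp add: wprod_snoc m_assoc)
  qed (use \<gamma>(1) g_Suc_k(1) in simp_all)
  then show ?thesis
    using \<gamma>(3) by fastforce
qed

lemma step_right_empty:
  assumes "\<alpha> \<noteq> []" "\<beta> = []"
  shows "\<exists>q' r'. tail_form (Suc k) q' r' \<and> length q < length q'"
proof -
  obtain \<alpha>' m x where \<alpha>': "\<alpha> = \<alpha>' @ [(m, x)]"
    using assms(1) by (cases \<alpha> rule: rev_cases) auto
  have mx: "m \<in> I" "x \<in> H m" "x \<in> carrier G" "alternating \<alpha>'" "\<alpha>' \<noteq> [] \<Longrightarrow> fst (last \<alpha>') \<noteq> m"
    using words(1) \<alpha>' by (auto simp: alternating_append alternating_Cons)
  have q_T_\<alpha>: "alternating (q @ (j, T) # \<alpha>)"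
    using tail_facts(1,2) T_letter tfactors(1) words(1) first_letters(1) assms(1)
    by (auto simp: alternating_append alternating_Cons)
  have hd_\<alpha>': "\<alpha>' \<noteq> [] \<Longrightarrow> fst (hd \<alpha>') \<noteq> j"
    using first_letters(1) assms(1) \<alpha>' by auto
  show ?thesis
  proof (cases "m = j'")
    case False
    have "tail_form (Suc k) (q @ (j, T) # \<alpha>) (d \<otimes> inv ck')"
    proof (rule tail_form_Suc_intro_C)
      show "wprod (q @ (j, T) # \<alpha>) \<otimes> (d \<otimes> inv ck') =
          wprod q \<otimes> T \<otimes> (wprod \<alpha> \<otimes> d \<otimes> inv (wprod \<beta>)) \<otimes> inv ck'"
        using q_T_\<alpha> tail_facts(1) T_letter tfactors(1) words carriers assms(2)
        by (simp add: wprod_append alternating_append alternating_Cons m_assoc H_carrier)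
    qed (use False \<alpha>' q_T_\<alpha> split(3) g_Suc_k(1) in auto)
    then show ?thesis
      by fastforce
  next
    case True
    let ?r = "x \<otimes> d \<otimes> inv ck'"
    have R: "right_factor G I H C (wprod ((m, x) # \<mu>)) (g k)"
      using right_factor_suffix[of \<alpha>' "(m, x) # \<mu>" ck] g_k split(1) \<alpha>' by simp
    have R_eq: "wprod ((m, x) # \<mu>) \<otimes> inv g (Suc k) = ?r"
      using g_Suc_k(3) split(2) assms(2) mx(3) words carriers by (simp add: inv_mult_group m_assoc)
    have "tail_form (Suc k) (q @ (j, T) # \<alpha>') ?r"
    proof (rule tail_form_Suc_intro)
      show "alternating (q @ (j, T) # \<alpha>')"
        using tail_facts(1,2) T_letter tfactors(1) mx(4) hd_\<alpha>' by (auto simp: alternating_append alternating_Cons)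
      show "q @ (j, T) # \<alpha>' \<noteq> [] \<Longrightarrow> fst (last (q @ (j, T) # \<alpha>')) \<noteq> j'"
        using mx(5) True first_letters(1) assms(1) \<alpha>' by (cases "\<alpha>' = []") auto
      show "?r \<in> H j'"
        using mx(2) True tfactors(3) C_in_H[OF tfactors(3) split(3)] C_in_H[OF tfactors(3) C.m_inv_closed[OF g_Suc_k(1)]]
        by (simp add: H_mult_closed)
      show "?r \<otimes> t (Suc k) \<notin> C"
        using no_right_cancellation[OF k_range(2), of "wprod ((m, x) # \<mu>)"] R R_eq k by simp
      show "?r \<in> C \<or> (\<exists>R. right_factor G I H C R (g k) \<and> ?r = R \<otimes> inv g (Suc k))"
        using R R_eq by metis
      show "wprod (q @ (j, T) # \<alpha>') \<otimes> ?r =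
          wprod q \<otimes> T \<otimes> (wprod \<alpha> \<otimes> d \<otimes> inv (wprod \<beta>)) \<otimes> inv ck'"
        using tail_facts(1) T_letter tfactors(1) mx words carriers assms(2) \<alpha>' \<open>alternating (q @ (j, T) # \<alpha>')\<close>
        by (simp add: wprod_append wprod_snoc alternating_append alternating_Cons m_assoc H_carrier)
    qed
    then show ?thesis
      by fastforce
  qed
qed

end

context tamed_conjugates
begin

lemma tail_form_step:
  assumes k: "1 \<le> k" "k < n" and tail: "tail_form k q r"
  shows "\<exists>q' r'. tail_form (Suc k) q' r' \<and> length q < length q'"
proof -
  obtain ck w where g_k: "ck \<in> C" "alternating w" "g k = ck \<otimes> wprod w"
    using normal_form_exists[OF g_carrier] k by (metis atLeastAtMost_iff less_imp_le_nat)
  obtain ck' v where g_Suc_k: "ck' \<in> C" "alternating v" "g (Suc k) = ck' \<otimes> wprod v"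
    using normal_form_exists[OF g_carrier] k by (metis atLeastAtMost_iff Suc_leI le_SucI)
  obtain \<alpha> \<mu> \<beta> \<nu> where split: "w = \<alpha> @ \<mu>" "v = \<beta> @ \<nu>" "wprod \<mu> \<otimes> inv (wprod \<nu>) \<in> C"
    and junction: "\<alpha> \<noteq> [] \<Longrightarrow> \<beta> \<noteq> [] \<Longrightarrow> fst (last \<alpha>) = fst (last \<beta>) \<Longrightarrow>
      snd (last \<alpha>) \<otimes> (wprod \<mu> \<otimes> inv (wprod \<nu>)) \<otimes> inv (snd (last \<beta>)) \<notin> C"
    using cancel_suffixes[OF g_k(2) g_Suc_k(2) C.one_closed] g_k(2) g_Suc_k(2)
    by (metis alternating_append r_one wprod_closed)
  interpret tamed_step G I H C n t g k q r ck ck' w v \<alpha> \<mu> \<beta> \<nu>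
    by unfold_locales (fact amalg_free_product n_pos tg_carrier tamed k tail g_k g_Suc_k split junction)+
  consider "\<alpha> = []" "\<beta> = []" | "\<beta> \<noteq> []" "\<alpha> = [] \<Longrightarrow> fst (last \<beta>) \<noteq> tfactor k"
    | "\<alpha> = []" "\<beta> \<noteq> []" "fst (last \<beta>) = tfactor k" | "\<alpha> \<noteq> []" "\<beta> = []"
    by blast
  then show ?thesis
    using step_cancelled step_unmerged step_merging step_right_empty by cases blast+
qed

lemma tail_form_exists:
  "1 \<le> k \<Longrightarrow> k \<le> n \<Longrightarrow> \<exists>q r. tail_form k q r \<and> len (g 1) + k \<le> length q + 1"
proof (induction k rule: nat_induct_at_least)
  case base
  then show ?case
    using tail_form_first by (metis add.commute order_refl)
next
  case (Suc k)
  then obtain q r where "tail_form k q r" "len (g 1) + k \<le> length q + 1"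
    by auto
  with tail_form_step[of k q r] Suc.hyps Suc.prems show ?case
    by fastforce
qed

lemma len_conj_prod_ge: "len (conj_prod G n t g) \<ge> len (g 1) + n + len (g n)"
proof -
  obtain q r where "tail_form n q r" "len (g 1) + n \<le> length q + 1"
    using tail_form_exists n_pos by blast
  then show ?thesis
    using tail_form_last by simp
qed

end

theorem mainTheorem18:
  fixes G :: "('a,'b) monoid_scheme" and I :: "'i set" and H :: "'i \<Rightarrow> 'a set" and C :: "'a set"
    and n :: nat and t g :: "nat \<Rightarrow> 'a"
  assumes "amalg_free_product G I H C"
    and "n \<ge> 1"
    and "\<forall>i\<in>{1..n}. t i \<in> carrier G \<and> g i \<in> carrier G"
    and "tamed G I H C n t g"
  shows "amalg_len G I H C (conj_prod G n t g) \<ge>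
           amalg_len G I H C (g 1) + n + amalg_len G I H C (g n)"
proof -
  interpret tamed_conjugates G I H C n t g
    using assms by unfold_locales
  show ?thesis
    by (rule len_conj_prod_ge)
qed

end
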